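(* Let $\nu>0$ and let $U(x,t)=\sum_{i=0}^\infty\sum_{k=0}^\infty U_{i,k}x^it^k$ be a given formal power series. For every choice of complex numbers $A_{i,1,k}$ ($i,k\ge 0$) there exist unique formal power series \[u=\sum_{i\ge0}\sum_{j\ge1}\sum_{k\ge0}A_{i,j,k}x^iy^jt^k,\qquad v=\sum_{i\ge0}\sum_{j\ge1}\sum_{k\ge0}B_{i,j,k}x^iy^jt^k\] (so that $u=v=0$ at $y=0$) with the prescribed coefficients $A_{i,1,k}$, satisfying, as identities of formal power series in $x,y,t$, Prandtl's boundary layer equations \[ u\frac{\partial u}{\partial x}+v\frac{\partial u}{\partial y}+\frac{\partial u}{\partial t}=\frac{\partial U}{\partial t}+U\frac{\partial U}{\partial x}+\nu\frac{\partial^2u}{\partial y^2},\qquad \frac{\partial u}{\partial x}+\frac{\partial v}{\partial y}=0 . \] Moreover, for all $i,k\ge0$: $B_{i,1,k}=0$; \[A_{i,2,k}=-\frac{1}{2\nu}\Big(U_{i,k+1}(k+1)+\sum_{p=0}^{i}\sum_{q=0}^{k}(i-p+1)U_{p,q}U_{i-p+1,k-q}\Big);\qquad A_{i,3,k}=\frac{(k+1)A_{i,1,k+1}}{6\nu};\] $B_{i,j,k}=-\frac{i+1}{j}A_{i+1,j-1,k}$ for $j\ge2$; and for $j\ge4$, \[ A_{i,j,k}=\frac{1}{\nu j(j-1)}\Big(A_{i,j-2,k+1}(k+1)+\sum_{p=0}^{i}\sum_{q=1}^{j-3}\sum_{r=0}^{k}(i-p+1)A_{p,q,r}A_{i-p+1,j-2-q,k-r}-\sum_{p=0}^{i}\sum_{q=2}^{j-2}\sum_{r=0}^{k}\frac{(p+1)(j-1-q)}{q}A_{p+1,q-1,r}A_{i-p,j-1-q,k-r}\Big).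 \]
   Context: Here $u,v$ are the velocity components in a two-dimensional boundary layer along a wall $y=0$, $U(x,t)$ is the external (outer) flow velocity, and the pressure gradient has been eliminated using $-\frac1\rho\frac{\partial P}{\partial x}=\frac{\partial U}{\partial t}+U\frac{\partial U}{\partial x}$. In the paper, the free coefficients $A_{i,1,k}$ are intended to be fixed by matching $u$ to the external flow $U$ away from the wall. *)

theory Defs
  imports Complex_Main
begin

text \<open>A formal power series in x, y, t with complex coefficients is represented by its
coefficient function: f i j k is the coefficient of x^i y^j t^k.\<close>

type_synonym ps3 = "nat \<Rightarrow> nat \<Rightarrow> nat \<Rightarrow> complex"

definition ps3_mult :: "ps3 \<Rightarrow> ps3 \<Rightarrow> ps3" where
  "ps3_mult f g i j k =
     (\<Sum>a\<le>i. \<Sum>b\<le>j. \<Sum>c\<le>k. f a b c * g (i - a) (j - b) (k - c))"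

definition ps3_dx :: "ps3 \<Rightarrow> ps3" where
  "ps3_dx f i j k = of_nat (Suc i) * f (Suc i) j k"

definition ps3_dy :: "ps3 \<Rightarrow> ps3" where
  "ps3_dy f i j k = of_nat (Suc j) * f i (Suc j) k"

definition ps3_dt :: "ps3 \<Rightarrow> ps3" where
  "ps3_dt f i j k = of_nat (Suc k) * f i j (Suc k)"

definition ps3_of_xt :: "(nat \<Rightarrow> nat \<Rightarrow> complex) \<Rightarrow> ps3" where
  "ps3_of_xt U i j k = (if j = 0 then U i k else 0)"

definition prandtl :: "real \<Rightarrow> (nat \<Rightarrow> nat \<Rightarrow> complex) \<Rightarrow> ps3 \<Rightarrow> ps3 \<Rightarrow> bool" where
  "prandtl \<nu> U u v \<longleftrightarrow>
     (\<forall>i j k.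
        ps3_mult u (ps3_dx u) i j k + ps3_mult v (ps3_dy u) i j k + ps3_dt u i j k
        = ps3_dt (ps3_of_xt U) i j k + ps3_mult (ps3_of_xt U) (ps3_dx (ps3_of_xt U)) i j k
          + complex_of_real \<nu> * ps3_dy (ps3_dy u) i j k) \<and>
     (\<forall>i j k. ps3_dx u i j k + ps3_dy v i j k = 0)"

end

theory Submission
  imports Defs
begin

text \<open>
  As \<open>v\<close> vanishes at \<open>y = 0\<close>, the continuity
  equation determines \<open>v\<close> from \<open>u\<close>: \<open>B(i,j+1,k) = -(i+1)/(j+1) A(i+1,j,k)\<close>. After this
  substitution the momentum equation at \<open>y\<close>-degree \<open>j\<close> contains the viscous term
  \<open>\<nu> (j+1) (j+2) A(i,j+2,k)\<close>, while all other terms involve \<open>u\<close> only at \<open>y\<close>-degrees \<open>\<le> j\<close>: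
  the convective products start at \<open>y\<close>-degree 2 because \<open>u\<close> and \<open>v\<close> vanish at \<open>y = 0\<close>, and
  the outer flow enters only at \<open>y\<close>-degree 0. Since \<open>\<nu> > 0\<close>, the momentum equations are thus
  equivalent to a recursion in \<open>j\<close> for the coefficients \<open>A(i,j,k)\<close>, \<open>j \<ge> 2\<close>, whose unique
  solution with prescribed \<open>A(i,1,k)\<close> gives the unique solution of the system.
\<close>

lemma ps3_mult_eq_sum_y_interior:
  assumes "\<And>i k. f i 0 k = 0" and "\<And>i k. g i 0 k = 0"
  shows "ps3_mult f g i j k =
    (\<Sum>a\<le>i. \<Sum>b\<in>{1..j - 1}. \<Sum>c\<le>k. f a b c * g (i - a) (j - b) (k - c))"
  unfolding ps3_mult_def
proof (rule sum.cong[OF refl], rule sum.mono_neutral_right)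
  show "\<forall>b\<in>{..j} - {1..j - 1}. (\<Sum>c\<le>k. f a b c * g (i - a) (j - b) (k - c)) = 0" for a
  proof
    fix b assume "b \<in> {..j} - {1..j - 1}"
    then have "b = 0 \<or> b = j" by auto
    then show "(\<Sum>c\<le>k. f a b c * g (i - a) (j - b) (k - c)) = 0"
      using assms by auto
  qed
qed auto

lemma ps3_mult_eq_sum_y_from_2:
  assumes "\<And>i k. f i 0 k = 0" and "\<And>i k. f i 1 k = 0"
  shows "ps3_mult f g i j k =
    (\<Sum>a\<le>i. \<Sum>b\<in>{2..j}. \<Sum>c\<le>k. f a b c * g (i - a) (j - b) (k - c))"
  unfolding ps3_mult_def
proof (rule sum.cong[OF refl], rule sum.mono_neutral_right)
  show "\<forall>b\<in>{..j} - {2..j}. (\<Sum>c\<le>k. f a b c * g (i - a) (j - b) (k - c)) = 0" for a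
  proof
    fix b assume "b \<in> {..j} - {2..j}"
    then have "b = 0 \<or> b = 1" by auto
    then show "(\<Sum>c\<le>k. f a b c * g (i - a) (j - b) (k - c)) = 0"
      using assms by auto
  qed
qed auto

lemma ps3_dt_of_xt:
  "ps3_dt (ps3_of_xt U) i j k = (if j = 0 then of_nat (k + 1) * U i (k + 1) else 0)"
  by (simp add: ps3_dt_def ps3_of_xt_def)

lemma ps3_mult_of_xt_dx:
  "ps3_mult (ps3_of_xt U) (ps3_dx (ps3_of_xt U)) i j k =
   (if j = 0 then \<Sum>p\<le>i. \<Sum>q\<le>k. of_nat (i - p + 1) * U p q * U (i - p + 1) (k - q) else 0)"
proof (cases "j = 0")
  case True
  then show ?thesis
    by (simp add: ps3_mult_def ps3_dx_def ps3_of_xt_def mult_ac)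
next
  case False
  then show ?thesis
    unfolding ps3_mult_def ps3_dx_def ps3_of_xt_def by (simp add: sum.neutral)
qed

definition continuity_v :: "ps3 \<Rightarrow> ps3" where
  "continuity_v u i j k =
     (if j < 2 then 0 else - (of_nat (i + 1) / of_nat j) * u (i + 1) (j - 1) k)"

lemma continuity_eq_iff:
  "ps3_dx u i j k + ps3_dy v i j k = 0 \<longleftrightarrow>
   v i (j + 1) k = - (of_nat (i + 1) / of_nat (j + 1)) * u (i + 1) j k"
proof -
  have "(of_nat (Suc j) :: complex) \<noteq> 0" by (rule of_nat_neq_0)
  then show ?thesis
    unfolding ps3_dx_def ps3_dy_def
    by (simp add: field_simps add_eq_0_iff del: of_nat_Suc)
qed

lemma continuity_iff_continuity_v:
  assumes u0: "\<And>i k. u i 0 k = 0" and v0: "\<And>i k. v i 0 k = 0"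
  shows "(\<forall>i j k. ps3_dx u i j k + ps3_dy v i j k = 0) \<longleftrightarrow> v = continuity_v u"
proof
  assume "\<forall>i j k. ps3_dx u i j k + ps3_dy v i j k = 0"
  then have v_Suc: "v i (Suc j) k = - (of_nat (i + 1) / of_nat (Suc j)) * u (i + 1) j k" for i j k
    using continuity_eq_iff by simp
  show "v = continuity_v u"
  proof (intro ext)
    fix i j k
    show "v i j k = continuity_v u i j k"
      by (cases j) (auto simp: continuity_v_def v0 u0 v_Suc)
  qed
next
  assume "v = continuity_v u"
  then show "\<forall>i j k. ps3_dx u i j k + ps3_dy v i j k = 0"
    by (simp add: continuity_eq_iff continuity_v_def u0)
qed

definition momentum_eq :: "real \<Rightarrow> (nat \<Rightarrow> nat \<Rightarrow> complex) \<Rightarrow> ps3 \<Rightarrow> ps3 \<Rightarrow> nat \<Rightarrow> nat \<Rightarrow> nat \<Rightarrow> bool" where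
  "momentum_eq \<nu> U u v i j k \<longleftrightarrow>
     ps3_mult u (ps3_dx u) i j k + ps3_mult v (ps3_dy u) i j k + ps3_dt u i j k
     = ps3_dt (ps3_of_xt U) i j k + ps3_mult (ps3_of_xt U) (ps3_dx (ps3_of_xt U)) i j k
       + complex_of_real \<nu> * ps3_dy (ps3_dy u) i j k"

lemma prandtl_iff_momentum_continuity:
  "prandtl \<nu> U u v \<longleftrightarrow>
   (\<forall>i j k. momentum_eq \<nu> U u v i j k) \<and> (\<forall>i j k. ps3_dx u i j k + ps3_dy v i j k = 0)"
  unfolding prandtl_def momentum_eq_def ..

lemma ps3_mult_dx_self:
  assumes "\<And>i k. A i 0 k = 0"
  shows "ps3_mult A (ps3_dx A) i j k = (\<Sum>p\<le>i. \<Sum>q\<in>{1..j - 1}. \<Sum>r\<le>k.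
    of_nat (i - p + 1) * A p q r * A (i - p + 1) (j - q) (k - r))"
  by (simp add: ps3_mult_eq_sum_y_interior assms ps3_dx_def mult_ac)

lemma ps3_mult_continuity_v_dy:
  "ps3_mult (continuity_v A) (ps3_dy A) i j k = - (\<Sum>p\<le>i. \<Sum>q\<in>{2..j}. \<Sum>r\<le>k.
    of_nat ((p + 1) * (j + 1 - q)) / of_nat q * A (p + 1) (q - 1) r * A (i - p) (j + 1 - q) (k - r))"
proof -
  have summand: "continuity_v A p q r * ps3_dy A (i - p) (j - q) (k - r) =
    - (of_nat ((p + 1) * (j + 1 - q)) / of_nat q * A (p + 1) (q - 1) r * A (i - p) (j + 1 - q) (k - r))"
    if "q \<in> {2..j}" for p q r
    using that
    by (simp add: continuity_v_def ps3_dy_def Suc_diff_le of_nat_mult mult_ac) (simp add: algebra_simps)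
  have "ps3_mult (continuity_v A) (ps3_dy A) i j k =
    (\<Sum>p\<le>i. \<Sum>q\<in>{2..j}. \<Sum>r\<le>k. continuity_v A p q r * ps3_dy A (i - p) (j - q) (k - r))"
    by (rule ps3_mult_eq_sum_y_from_2) (simp_all add: continuity_v_def)
  also have "\<dots> = (\<Sum>p\<le>i. \<Sum>q\<in>{2..j}. \<Sum>r\<le>k. - (of_nat ((p + 1) * (j + 1 - q)) / of_nat q
      * A (p + 1) (q - 1) r * A (i - p) (j + 1 - q) (k - r)))"
    by (intro sum.cong refl summand) simp
  finally show ?thesis
    by (simp add: sum_negf)
qed

text \<open>The values of \<open>A i 2 k\<close> and of \<open>A i j k\<close>, \<open>j \<ge> 3\<close>, forced by the momentum equation
  at \<open>y\<close>-degrees 0 and \<open>j - 2\<close> respectively.\<close>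

definition prandtl_coeff2 :: "real \<Rightarrow> (nat \<Rightarrow> nat \<Rightarrow> complex) \<Rightarrow> nat \<Rightarrow> nat \<Rightarrow> complex" where
  "prandtl_coeff2 \<nu> U i k = - (1 / (2 * complex_of_real \<nu>)) *
     (U i (k + 1) * of_nat (k + 1) +
      (\<Sum>p\<le>i. \<Sum>q\<le>k. of_nat (i - p + 1) * U p q * U (i - p + 1) (k - q)))"

definition prandtl_coeff_rec :: "real \<Rightarrow> ps3 \<Rightarrow> nat \<Rightarrow> nat \<Rightarrow> nat \<Rightarrow> complex" where
  "prandtl_coeff_rec \<nu> A i j k = 1 / (complex_of_real \<nu> * of_nat j * of_nat (j - 1)) *
     (A i (j - 2) (k + 1) * of_nat (k + 1)
      + (\<Sum>p\<le>i. \<Sum>q\<in>{1..j - 3}. \<Sum>r\<le>k.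
           of_nat (i - p + 1) * A p q r * A (i - p + 1) (j - 2 - q) (k - r))
      - (\<Sum>p\<le>i. \<Sum>q\<in>{2..j - 2}. \<Sum>r\<le>k.
           of_nat ((p + 1) * (j - 1 - q)) / of_nat q
           * A (p + 1) (q - 1) r * A (i - p) (j - 1 - q) (k - r)))"

context
  fixes \<nu> :: real and U :: "nat \<Rightarrow> nat \<Rightarrow> complex" and A :: ps3
  assumes nu: "\<nu> > 0" and A0: "\<And>i k. A i 0 k = 0"
begin

lemma momentum_eq_0_iff:
  "momentum_eq \<nu> U A (continuity_v A) i 0 k \<longleftrightarrow> A i 2 k = prandtl_coeff2 \<nu> U i k"
proof -
  define S where "S = U i (k + 1) * of_nat (k + 1) +
    (\<Sum>p\<le>i. \<Sum>q\<le>k. of_nat (i - p + 1) * U p q * U (i - p + 1) (k - q))"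
  have "ps3_mult A (ps3_dx A) i 0 k + ps3_mult (continuity_v A) (ps3_dy A) i 0 k + ps3_dt A i 0 k = 0"
    by (simp add: ps3_mult_dx_self A0 ps3_mult_continuity_v_dy ps3_dt_def)
  moreover have "ps3_dt (ps3_of_xt U) i 0 k + ps3_mult (ps3_of_xt U) (ps3_dx (ps3_of_xt U)) i 0 k = S"
    by (simp add: ps3_dt_of_xt ps3_mult_of_xt_dx S_def mult.commute)
  moreover have "ps3_dy (ps3_dy A) i 0 k = 2 * A i 2 k"
    by (simp add: ps3_dy_def numeral_2_eq_2)
  ultimately have "momentum_eq \<nu> U A (continuity_v A) i 0 k \<longleftrightarrow> 0 = S + complex_of_real \<nu> * (2 * A i 2 k)"
    unfolding momentum_eq_def by simp
  also have "\<dots> \<longleftrightarrow> A i 2 k = prandtl_coeff2 \<nu> U i k"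
    using nu unfolding prandtl_coeff2_def S_def[symmetric] by (auto simp: field_simps add_eq_0_iff)
  finally show ?thesis .
qed

lemma momentum_eq_pos_iff:
  assumes "j \<ge> 1"
  shows "momentum_eq \<nu> U A (continuity_v A) i j k \<longleftrightarrow>
    A i (j + 2) k = prandtl_coeff_rec \<nu> A i (j + 2) k"
proof -
  define S where "S = A i j (k + 1) * of_nat (k + 1)
    + (\<Sum>p\<le>i. \<Sum>q\<in>{1..j - 1}. \<Sum>r\<le>k. of_nat (i - p + 1) * A p q r * A (i - p + 1) (j - q) (k - r))
    - (\<Sum>p\<le>i. \<Sum>q\<in>{2..j}. \<Sum>r\<le>k.
       of_nat ((p + 1) * (j + 1 - q)) / of_nat q * A (p + 1) (q - 1) r * A (i - p) (j + 1 - q) (k - r))"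
  define c where "c = complex_of_real \<nu> * of_nat (j + 2) * of_nat (j + 1)"
  have "ps3_mult A (ps3_dx A) i j k + ps3_mult (continuity_v A) (ps3_dy A) i j k + ps3_dt A i j k = S"
    by (simp add: S_def ps3_mult_dx_self A0 ps3_mult_continuity_v_dy ps3_dt_def mult.commute)
  moreover have "ps3_dt (ps3_of_xt U) i j k + ps3_mult (ps3_of_xt U) (ps3_dx (ps3_of_xt U)) i j k = 0"
    using assms by (simp add: ps3_dt_of_xt ps3_mult_of_xt_dx)
  moreover have "complex_of_real \<nu> * ps3_dy (ps3_dy A) i j k = c * A i (j + 2) k"
    by (simp add: ps3_dy_def c_def mult_ac)
  ultimately have "momentum_eq \<nu> U A (continuity_v A) i j k \<longleftrightarrow> S = c * A i (j + 2) k"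
    unfolding momentum_eq_def by simp
  moreover have "c \<noteq> 0"
    using nu by (simp add: c_def del: of_nat_Suc of_nat_add)
  moreover have "prandtl_coeff_rec \<nu> A i (j + 2) k = S / c"
    using assms unfolding prandtl_coeff_rec_def S_def c_def
    by (simp add: numeral_3_eq_3 numeral_2_eq_2 Suc_diff_Suc mult_ac)
  ultimately show ?thesis
    by (auto simp: field_simps)
qed

end

lemma prandtl_coeff_rec_3:
  "prandtl_coeff_rec \<nu> A i 3 k = of_nat (k + 1) * A i 1 (k + 1) / (6 * complex_of_real \<nu>)"
  by (simp add: prandtl_coeff_rec_def field_simps)

lemma prandtl_coeff_rec_cong:
  assumes "0 < j" and "\<And>p q r. q < j \<Longrightarrow> A p q r = A' p q r"
  shows "prandtl_coeff_rec \<nu> A i j k = prandtl_coeff_rec \<nu> A' i j k"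
proof -
  have "(\<Sum>p\<le>i. \<Sum>q\<in>{1..j - 3}. \<Sum>r\<le>k.
           of_nat (i - p + 1) * A p q r * A (i - p + 1) (j - 2 - q) (k - r)) =
        (\<Sum>p\<le>i. \<Sum>q\<in>{1..j - 3}. \<Sum>r\<le>k.
           of_nat (i - p + 1) * A' p q r * A' (i - p + 1) (j - 2 - q) (k - r))"
    using assms by (intro sum.cong refl) auto
  moreover have "(\<Sum>p\<le>i. \<Sum>q\<in>{2..j - 2}. \<Sum>r\<le>k.
           of_nat ((p + 1) * (j - 1 - q)) / of_nat q * A (p + 1) (q - 1) r * A (i - p) (j - 1 - q) (k - r)) =
        (\<Sum>p\<le>i. \<Sum>q\<in>{2..j - 2}. \<Sum>r\<le>k.
           of_nat ((p + 1) * (j - 1 - q)) / of_nat q * A' (p + 1) (q - 1) r * A' (i - p) (j - 1 - q) (k - r))"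
    using assms by (intro sum.cong refl) auto
  ultimately show ?thesis
    using assms by (simp add: prandtl_coeff_rec_def)
qed

lemma all_nat_split_zero:
  "(\<forall>i j k. P i j k) \<longleftrightarrow> (\<forall>i k. P i 0 k) \<and> (\<forall>i j k. 1 \<le> j \<longrightarrow> P i (j :: nat) k)"
  by (metis One_nat_def Suc_leI not_gr_zero)

lemma all_nat_shift_2:
  "(\<forall>i j k. 1 \<le> j \<longrightarrow> P i (j + 2) k) \<longleftrightarrow> (\<forall>i j k. 3 \<le> j \<longrightarrow> P i (j :: nat) k)"
proof
  assume shifted: "\<forall>i j k. 1 \<le> j \<longrightarrow> P i (j + 2) k"
  show "\<forall>i j k. 3 \<le> j \<longrightarrow> P i j k"
  proof (intro allI impI)
    fix i j k assume "3 \<le> (j :: nat)"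
    then have "1 \<le> j - 2" and "j - 2 + 2 = j" by auto
    then show "P i j k" using shifted by metis
  qed
qed auto

lemma prandtl_iff_recursion:
  assumes nu: "\<nu> > 0" and u0: "\<And>i k. u i 0 k = 0" and v0: "\<And>i k. v i 0 k = 0"
  shows "prandtl \<nu> U u v \<longleftrightarrow> v = continuity_v u \<and>
    (\<forall>i k. u i 2 k = prandtl_coeff2 \<nu> U i k) \<and>
    (\<forall>i j k. 3 \<le> j \<longrightarrow> u i j k = prandtl_coeff_rec \<nu> u i j k)"
proof -
  have "(\<forall>i j k. momentum_eq \<nu> U u (continuity_v u) i j k) \<longleftrightarrow>
    (\<forall>i k. u i 2 k = prandtl_coeff2 \<nu> U i k) \<and>
    (\<forall>i j k. 1 \<le> j \<longrightarrow> u i (j + 2) k = prandtl_coeff_rec \<nu> u i (j + 2) k)"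
    unfolding all_nat_split_zero[of "momentum_eq \<nu> U u (continuity_v u)"]
    using momentum_eq_0_iff[where A = u, OF nu u0] momentum_eq_pos_iff[where A = u, OF nu u0]
    by blast
  also have "\<dots> \<longleftrightarrow> (\<forall>i k. u i 2 k = prandtl_coeff2 \<nu> U i k) \<and>
    (\<forall>i j k. 3 \<le> j \<longrightarrow> u i j k = prandtl_coeff_rec \<nu> u i j k)"
    by (simp only: all_nat_shift_2[where P = "\<lambda>i j k. u i j k = prandtl_coeff_rec \<nu> u i j k"])
  finally show ?thesis
    unfolding prandtl_iff_momentum_continuity continuity_iff_continuity_v[where u = u and v = v, OF u0 v0] by auto
qed

definition prandtl_next :: "real \<Rightarrow> (nat \<Rightarrow> nat \<Rightarrow> complex) \<Rightarrow> (nat \<Rightarrow> nat \<Rightarrow> complex) \<Rightarrow> ps3 \<Rightarrow> ps3"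
  where "prandtl_next \<nu> U A1 u i j k =
    (if j = 0 then 0 else if j = 1 then A1 i k else if j = 2 then prandtl_coeff2 \<nu> U i k
     else prandtl_coeff_rec \<nu> u i j k)"

lemma prandtl_next_cong [fundef_cong]:
  assumes "j = j'" and "\<And>p q r. q < j' \<Longrightarrow> u p q r = u' p q r"
  shows "prandtl_next \<nu> U A1 u i j k = prandtl_next \<nu> U A1 u' i j' k"
  using assms prandtl_coeff_rec_cong[of j u u'] by (simp add: prandtl_next_def)

function prandtl_u :: "real \<Rightarrow> (nat \<Rightarrow> nat \<Rightarrow> complex) \<Rightarrow> (nat \<Rightarrow> nat \<Rightarrow> complex) \<Rightarrow> ps3" where
  "prandtl_u \<nu> U A1 i j k = prandtl_next \<nu> U A1 (prandtl_u \<nu> U A1) i j k"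
  by auto
termination by (relation "measure (\<lambda>(\<nu>, U, A1, i, j, k). j)") auto

declare prandtl_u.simps [simp del]

lemma prandtl_next_fixed_point_iff:
  "u = prandtl_next \<nu> U A1 u \<longleftrightarrow> u = prandtl_u \<nu> U A1"
proof
  assume fixed: "u = prandtl_next \<nu> U A1 u"
  have "u i j k = prandtl_u \<nu> U A1 i j k" for i j k
  proof (induction j arbitrary: i k rule: less_induct)
    case (less j)
    have "u i j k = prandtl_next \<nu> U A1 u i j k"
      using fixed by (simp add: fun_eq_iff)
    also have "\<dots> = prandtl_next \<nu> U A1 (prandtl_u \<nu> U A1) i j k"
      by (rule prandtl_next_cong) (simp_all add: less.IH)
    finally show ?case
      by (simp add: prandtl_u.simps[of \<nu> U A1 i j k])
  qed
  then show "u = prandtl_u \<nu> U A1"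
    by blast
next
  assume "u = prandtl_u \<nu> U A1"
  then show "u = prandtl_next \<nu> U A1 u"
    by (auto intro!: ext simp: prandtl_u.simps[of \<nu> U A1])
qed

lemma prandtl_next_fixed_point_iff_coeffs:
  "u = prandtl_next \<nu> U A1 u \<longleftrightarrow>
    (\<forall>i k. u i 0 k = 0) \<and> (\<forall>i k. u i 1 k = A1 i k) \<and>
    (\<forall>i k. u i 2 k = prandtl_coeff2 \<nu> U i k) \<and>
    (\<forall>i j k. 3 \<le> j \<longrightarrow> u i j k = prandtl_coeff_rec \<nu> u i j k)"
    (is "_ \<longleftrightarrow> ?coeffs")
proof
  assume "u = prandtl_next \<nu> U A1 u"
  then have "u i j k = prandtl_next \<nu> U A1 u i j k" for i j k
    by (simp add: fun_eq_iff)
  then show ?coeffs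
    by (simp add: prandtl_next_def)
next
  assume ?coeffs
  then show "u = prandtl_next \<nu> U A1 u"
    by (auto simp: fun_eq_iff prandtl_next_def)
qed

lemma prandtl_solution_iff:
  assumes "\<nu> > 0"
  shows "(\<forall>i k. u i 0 k = 0) \<and> (\<forall>i k. v i 0 k = 0) \<and> (\<forall>i k. u i 1 k = A1 i k) \<and>
      prandtl \<nu> U u v \<longleftrightarrow>
    u = prandtl_u \<nu> U A1 \<and> v = continuity_v u"
  using prandtl_iff_recursion[OF assms, of u v U]
  unfolding prandtl_next_fixed_point_iff[symmetric] prandtl_next_fixed_point_iff_coeffs
  by (auto simp: continuity_v_def)

lemma prandtl_u_coeffs:
  "prandtl_u \<nu> U A1 i 2 k = prandtl_coeff2 \<nu> U i k"
  "prandtl_u \<nu> U A1 i 3 k = of_nat (k + 1) * prandtl_u \<nu> U A1 i 1 (k + 1) / (6 * complex_of_real \<nu>)"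
  "4 \<le> j \<Longrightarrow> prandtl_u \<nu> U A1 i j k = prandtl_coeff_rec \<nu> (prandtl_u \<nu> U A1) i j k"
  by (subst prandtl_u.simps; simp add: prandtl_next_def prandtl_coeff_rec_3)+

theorem mainTheorem2:
  fixes \<nu> :: real and U :: "nat \<Rightarrow> nat \<Rightarrow> complex" and A1 :: "nat \<Rightarrow> nat \<Rightarrow> complex"
  assumes "\<nu> > 0"
  shows "(\<exists>!uv :: ps3 \<times> ps3.
            (\<forall>i k. fst uv i 0 k = 0) \<and> (\<forall>i k. snd uv i 0 k = 0) \<and>
            (\<forall>i k. fst uv i 1 k = A1 i k) \<and> prandtl \<nu> U (fst uv) (snd uv))
   \<and> (\<forall>A B :: ps3.
        (\<forall>i k. A i 0 k = 0) \<and> (\<forall>i k. B i 0 k = 0) \<and>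
        (\<forall>i k. A i 1 k = A1 i k) \<and> prandtl \<nu> U A B \<longrightarrow>
        (\<forall>i k. B i 1 k = 0) \<and>
        (\<forall>i k. A i 2 k = - (1 / (2 * complex_of_real \<nu>)) *
              (U i (k + 1) * of_nat (k + 1) +
               (\<Sum>p\<le>i. \<Sum>q\<le>k. of_nat (i - p + 1) * U p q * U (i - p + 1) (k - q)))) \<and>
        (\<forall>i k. A i 3 k = of_nat (k + 1) * A i 1 (k + 1) / (6 * complex_of_real \<nu>)) \<and>
        (\<forall>i j k. j \<ge> 2 \<longrightarrow> B i j k = - (of_nat (i + 1) / of_nat j) * A (i + 1) (j - 1) k) \<and>
        (\<forall>i j k. j \<ge> 4 \<longrightarrow>
           A i j k = 1 / (complex_of_real \<nu> * of_nat j * of_nat (j - 1)) *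
             (A i (j - 2) (k + 1) * of_nat (k + 1)
              + (\<Sum>p\<le>i. \<Sum>q\<in>{1..j - 3}. \<Sum>r\<le>k.
                   of_nat (i - p + 1) * A p q r * A (i - p + 1) (j - 2 - q) (k - r))
              - (\<Sum>p\<le>i. \<Sum>q\<in>{2..j - 2}. \<Sum>r\<le>k.
                   of_nat ((p + 1) * (j - 1 - q)) / of_nat q
                   * A (p + 1) (q - 1) r * A (i - p) (j - 1 - q) (k - r)))))"
proof -
  note solution_iff = prandtl_solution_iff[OF assms, of _ _ A1 U]
  show ?thesis
  proof (rule conjI)
    show "\<exists>!uv :: ps3 \<times> ps3. (\<forall>i k. fst uv i 0 k = 0) \<and> (\<forall>i k. snd uv i 0 k = 0) \<and>
        (\<forall>i k. fst uv i 1 k = A1 i k) \<and> prandtl \<nu> U (fst uv) (snd uv)"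
      by (simp only: solution_iff) (auto simp: prod_eq_iff)
  qed (simp only: solution_iff, simp add: continuity_v_def prandtl_u_coeffs[unfolded prandtl_coeff2_def prandtl_coeff_rec_def])
qed

end
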